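(* Let $G$ be a maximal $3$-$\gamma_{c}$-vertex critical graph of order $n$, with independence number $\alpha$ and clique number $\omega$. Then $\alpha+\omega\leq n-1$, and equality holds if and only if $G\in\mathcal{G}_{1}(l)$ for some $l\geq 2$.
   Context: All graphs are finite, simple and connected. A set $D\subseteq V(G)$ is a connected dominating set of $G$ if every vertex of $G$ is in $D$ or adjacent to a vertex of $D$, and $G[D]$ is connected; $\gamma_{c}(G)$ is the minimum cardinality of such a set. $G$ is $k$-$\gamma_{c}$-edge critical if $\gamma_{c}(G)=k$ and $\gamma_{c}(G+uv)<k$ for every pair of non-adjacent vertices $u,v$. A $2$-connected graph $G$ is $k$-$\gamma_{c}$-vertex critical if $\gamma_{c}(G)=k$ and $\gamma_{c}(G-v)<k$ for every $v\in V(G)$. $G$ is maximal $k$-$\gamma_{c}$-vertex critical if it is both $k$-$\gamma_{c}$-edge critical and $k$-$\gamma_{c}$-vertex critical. For $l\geq 2$, the class $\mathcal{G}_{1}(l)$ consists of the graphs (unique up to isomorphism) on vertex set $\{v,q_{1},\dots,q_{l},z_{1},\dots,z_{l}\}$ whose edges are: $vz_{i}$ for all $i$; $q_{i}q_{j}$ for all $i\neq j$; and $z_{i}q_{j}$ for all $i\neq j$ (so $\{q_1,\dots,q_l\}$ is a clique, $\{z_1,\dots,z_l\}$ is independent, and $z_iq_i\notin E$). For $l=2$ this graph is $C_5$. *)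

theory Defs
  imports Main
begin

definition graph :: "'a set \<Rightarrow> ('a \<times> 'a) set \<Rightarrow> bool" where
  "graph V E \<longleftrightarrow> finite V \<and> E \<subseteq> V \<times> V \<and> sym E \<and> irrefl E"

definition induced :: "('a \<times> 'a) set \<Rightarrow> 'a set \<Rightarrow> ('a \<times> 'a) set" where
  "induced E S = E \<inter> (S \<times> S)"

definition connected_set :: "('a \<times> 'a) set \<Rightarrow> 'a set \<Rightarrow> bool" where
  "connected_set E S \<longleftrightarrow> S \<noteq> {} \<and> (\<forall>u\<in>S. \<forall>v\<in>S. (u, v) \<in> (induced E S)\<^sup>*)"

definition connected_graph :: "'a set \<Rightarrow> ('a \<times> 'a) set \<Rightarrow> bool" where
  "connected_graph V E \<longleftrightarrow> graph V E \<and> connected_set E V"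

definition two_connected :: "'a set \<Rightarrow> ('a \<times> 'a) set \<Rightarrow> bool" where
  "two_connected V E \<longleftrightarrow> connected_graph V E \<and> card V \<ge> 3 \<and>
     (\<forall>v\<in>V. connected_set E (V - {v}))"

definition dominating :: "'a set \<Rightarrow> ('a \<times> 'a) set \<Rightarrow> 'a set \<Rightarrow> bool" where
  "dominating V E D \<longleftrightarrow> D \<subseteq> V \<and> (\<forall>x\<in>V. x \<in> D \<or> (\<exists>d\<in>D. (x, d) \<in> E))"

definition connected_dominating :: "'a set \<Rightarrow> ('a \<times> 'a) set \<Rightarrow> 'a set \<Rightarrow> bool" where
  "connected_dominating V E D \<longleftrightarrow> dominating V E D \<and> connected_set E D"

definition gamma_c :: "'a set \<Rightarrow> ('a \<times> 'a) set \<Rightarrow> nat" where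
  "gamma_c V E = (LEAST k. \<exists>D. connected_dominating V E D \<and> card D = k)"

definition add_edge :: "('a \<times> 'a) set \<Rightarrow> 'a \<Rightarrow> 'a \<Rightarrow> ('a \<times> 'a) set" where
  "add_edge E u v = E \<union> {(u, v), (v, u)}"

definition delete_vertex :: "'a set \<Rightarrow> ('a \<times> 'a) set \<Rightarrow> 'a \<Rightarrow> ('a \<times> 'a) set" where
  "delete_vertex V E v = induced E (V - {v})"

definition edge_critical :: "nat \<Rightarrow> 'a set \<Rightarrow> ('a \<times> 'a) set \<Rightarrow> bool" where
  "edge_critical k V E \<longleftrightarrow> connected_graph V E \<and> gamma_c V E = k \<and>
     (\<forall>u\<in>V. \<forall>v\<in>V. u \<noteq> v \<and> (u, v) \<notin> E \<longrightarrow> gamma_c V (add_edge E u v) < k)"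

definition vertex_critical :: "nat \<Rightarrow> 'a set \<Rightarrow> ('a \<times> 'a) set \<Rightarrow> bool" where
  "vertex_critical k V E \<longleftrightarrow> two_connected V E \<and> gamma_c V E = k \<and>
     (\<forall>v\<in>V. gamma_c (V - {v}) (delete_vertex V E v) < k)"

definition maximal_vertex_critical :: "nat \<Rightarrow> 'a set \<Rightarrow> ('a \<times> 'a) set \<Rightarrow> bool" where
  "maximal_vertex_critical k V E \<longleftrightarrow> edge_critical k V E \<and> vertex_critical k V E"

definition independent :: "('a \<times> 'a) set \<Rightarrow> 'a set \<Rightarrow> bool" where
  "independent E S \<longleftrightarrow> (\<forall>u\<in>S. \<forall>v\<in>S. (u, v) \<notin> E)"

definition clique :: "('a \<times> 'a) set \<Rightarrow> 'a set \<Rightarrow> bool" where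
  "clique E S \<longleftrightarrow> (\<forall>u\<in>S. \<forall>v\<in>S. u \<noteq> v \<longrightarrow> (u, v) \<in> E)"

definition independence_number :: "'a set \<Rightarrow> ('a \<times> 'a) set \<Rightarrow> nat" where
  "independence_number V E = Max {card S | S. S \<subseteq> V \<and> independent E S}"

definition clique_number :: "'a set \<Rightarrow> ('a \<times> 'a) set \<Rightarrow> nat" where
  "clique_number V E = Max {card S | S. S \<subseteq> V \<and> clique E S}"

datatype g1v = Vtx | Q nat | Z nat

definition g1_V :: "nat \<Rightarrow> g1v set" where
  "g1_V l = {Vtx} \<union> Q ` {1..l} \<union> Z ` {1..l}"

definition g1_E :: "nat \<Rightarrow> (g1v \<times> g1v) set" where
  "g1_E l =
     {(Vtx, Z i) | i. i \<in> {1..l}} \<union> {(Z i, Vtx) | i. i \<in> {1..l}} \<union>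
     {(Q i, Q j) | i j. i \<in> {1..l} \<and> j \<in> {1..l} \<and> i \<noteq> j} \<union>
     {(Z i, Q j) | i j. i \<in> {1..l} \<and> j \<in> {1..l} \<and> i \<noteq> j} \<union>
     {(Q j, Z i) | i j. i \<in> {1..l} \<and> j \<in> {1..l} \<and> i \<noteq> j}"

definition graph_iso :: "'a set \<Rightarrow> ('a \<times> 'a) set \<Rightarrow> 'b set \<Rightarrow> ('b \<times> 'b) set \<Rightarrow> bool" where
  "graph_iso V E V' E' \<longleftrightarrow> (\<exists>f. bij_betw f V V' \<and>
     (\<forall>u\<in>V. \<forall>w\<in>V. (u, w) \<in> E \<longleftrightarrow> (f u, f w) \<in> E'))"

definition in_G1 :: "nat \<Rightarrow> 'a set \<Rightarrow> ('a \<times> 'a) set \<Rightarrow> bool" where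
  "in_G1 l V E \<longleftrightarrow> graph_iso V E (g1_V l) (g1_E l)"

end

theory Submission
  imports Defs
begin

text \<open>Let \<open>S\<close> be a maximum independent set and \<open>C\<close> a maximum clique; they share at most one
  vertex. Since \<open>\<gamma>\<^sub>c(G) = 3\<close>, no vertex or edge dominates \<open>G\<close>, while vertex criticality
  gives for every \<open>x\<close> an edge dominating \<open>G - x\<close> whose ends are both non-adjacent to \<open>x\<close>.
  For \<open>x \<in> C\<close> the ends of this edge lie outside \<open>C\<close> and not both in \<open>S\<close>. This forces a vertex
  outside \<open>S \<union> C\<close> when \<open>S \<inter> C = {}\<close> and two such vertices when \<open>S \<inter> C = {c}\<close>, whence
  \<open>\<alpha> + \<omega> \<le> n - 1\<close>.

  In the case of equality, moving \<open>c\<close> and one outside vertex between the two sides (edge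
  criticality decides in which direction) leads to \<open>V = S \<union> C \<union> {r}\<close> with \<open>S \<inter> C = {}\<close>. Then
  \<open>r\<close> is adjacent exactly to \<open>S\<close>, and every \<open>v \<in> C\<close> has exactly one non-neighbour
  \<open>\<sigma>(v) \<in> S\<close>, with \<open>\<sigma>\<close> a bijection: this is \<open>G\<^sub>1(|C|)\<close> with \<open>r\<close>, \<open>C\<close>, \<open>S\<close> in the roles of
  \<open>v\<close>, the \<open>q\<^sub>i\<close> and the \<open>z\<^sub>i\<close>. Conversely \<open>G\<^sub>1(l)\<close> has \<open>\<alpha> = \<omega> = l\<close> and \<open>2l + 1\<close> vertices.\<close>

section \<open>Connected dominating pairs\<close>

lemma connected_set_pair_iff:
  assumes "sym E"
  shows "connected_set E {a, b} \<longleftrightarrow> a = b \<or> (a, b) \<in> E"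
proof
  assume "connected_set E {a, b}"
  then have "(a, b) \<in> (induced E {a, b})\<^sup>*"
    unfolding connected_set_def by simp
  then show "a = b \<or> (a, b) \<in> E"
    by (induction rule: rtrancl_induct) (auto simp: induced_def)
next
  assume "a = b \<or> (a, b) \<in> E"
  then have "(u, v) \<in> induced E {a, b}" if "u \<in> {a, b}" "v \<in> {a, b}" "u \<noteq> v" for u v
    using that assms by (auto simp: induced_def dest: symD)
  then show "connected_set E {a, b}"
    unfolding connected_set_def by (metis insert_not_empty r_into_rtrancl rtrancl_refl)
qed

lemma connected_dominating_pair_iff:
  assumes "sym E"
  shows "connected_dominating V E {a, b} \<longleftrightarrow> a \<in> V \<and> b \<in> V \<and> (a = b \<or> (a, b) \<in> E) \<and>
           (\<forall>z\<in>V. z = a \<or> z = b \<or> (z, a) \<in> E \<or> (z, b) \<in> E)"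
  using connected_set_pair_iff[OF assms]
  unfolding connected_dominating_def dominating_def by auto

lemma card_le_2_nonempty_pair:
  assumes "finite D" "D \<noteq> {}" "card D \<le> 2"
  obtains a b where "D = {a, b}"
proof -
  obtain a where a: "a \<in> D" using assms(2) by blast
  have "card (D - {a}) \<le> Suc 0" using assms(1,3) a by (simp add: card_Diff_singleton)
  then have "\<forall>x\<in>D - {a}. \<forall>y\<in>D - {a}. x = y"
    using assms(1) card_le_Suc0_iff_eq[of "D - {a}"] by blast
  then have "D = {a, a} \<or> (\<exists>b. D = {a, b})" using a by blast
  then show ?thesis using that by blast
qed

lemma gamma_c_le_card:
  assumes "connected_dominating V E D"
  shows "gamma_c V E \<le> card D"
  unfolding gamma_c_def by (rule Least_le) (use assms in blast)

lemma gamma_c_less_3_dominating_pair: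
  assumes "finite V" "sym E" "connected_dominating V E D" "gamma_c V E < 3"
  obtains a b where "a \<in> V" "b \<in> V" "a = b \<or> (a, b) \<in> E"
    "\<forall>z\<in>V. z = a \<or> z = b \<or> (z, a) \<in> E \<or> (z, b) \<in> E"
proof -
  obtain D' where D': "connected_dominating V E D'" "card D' = gamma_c V E"
    unfolding gamma_c_def using LeastI[of "\<lambda>k. \<exists>D. connected_dominating V E D \<and> card D = k"] assms(3)
    by blast
  have "finite D'" "D' \<noteq> {}"
    using D'(1) assms(1) finite_subset
    unfolding connected_dominating_def dominating_def connected_set_def by auto
  moreover have "card D' \<le> 2" using D'(2) assms(4) by simp
  ultimately obtain a b where "D' = {a, b}"
    by (rule card_le_2_nonempty_pair)
  then show ?thesis
    using that D'(1) connected_dominating_pair_iff[OF assms(2)] by blast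
qed

lemma add_edge_iff: "(x, y) \<in> add_edge E u w \<longleftrightarrow> (x, y) \<in> E \<or> (x = u \<and> y = w) \<or> (x = w \<and> y = u)"
  unfolding add_edge_def by blast

lemma connected_set_imp_neighbour:
  assumes "connected_set E V" "x \<in> V" "y \<in> V" "x \<noteq> y"
  obtains z where "z \<in> V" "(x, z) \<in> E"
proof -
  have "(x, y) \<in> (induced E V)\<^sup>*" using assms unfolding connected_set_def by auto
  then obtain z where "(x, z) \<in> induced E V" using assms(4) by (metis converse_rtranclE)
  then show ?thesis using that unfolding induced_def by auto
qed

section \<open>Maximal 3-\<open>\<gamma>\<^sub>c\<close>-vertex-critical graphs\<close>

text \<open>Connected dominating sets of size at most two are written out as a vertex or an edge:
  \<open>no_dominating_pair\<close> is \<open>\<gamma>\<^sub>c(G) \<ge> 3\<close>, \<open>edge_addition\<close> is \<open>\<gamma>\<^sub>c(G + uw) \<le> 2\<close>, and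
  \<open>vertex_deletion\<close> is what \<open>\<gamma>\<^sub>c(G - x) \<le> 2\<close> amounts to in a connected graph with \<open>\<gamma>\<^sub>c(G) = 3\<close>.\<close>

locale max_gc3_critical =
  fixes V :: "'a set" and E :: "('a \<times> 'a) set"
  assumes finite_V: "finite V"
    and edges_in_V: "E \<subseteq> V \<times> V"
    and edge_sym: "(x, y) \<in> E \<Longrightarrow> (y, x) \<in> E"
    and edge_irrefl: "(x, x) \<notin> E"
    and V_nonempty: "V \<noteq> {}"
    and no_dominating_pair: "a \<in> V \<Longrightarrow> b \<in> V \<Longrightarrow> a = b \<or> (a, b) \<in> E \<Longrightarrow>
      \<exists>z\<in>V. z \<noteq> a \<and> z \<noteq> b \<and> (z, a) \<notin> E \<and> (z, b) \<notin> E"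
    and vertex_deletion: "x \<in> V \<Longrightarrow> \<exists>a b. a \<in> V \<and> b \<in> V \<and> (a, b) \<in> E \<and> a \<noteq> x \<and> b \<noteq> x \<and>
      (x, a) \<notin> E \<and> (x, b) \<notin> E \<and> (\<forall>z\<in>V. z = x \<or> z = a \<or> z = b \<or> (z, a) \<in> E \<or> (z, b) \<in> E)"
    and edge_addition: "u \<in> V \<Longrightarrow> w \<in> V \<Longrightarrow> u \<noteq> w \<Longrightarrow> (u, w) \<notin> E \<Longrightarrow>
      \<exists>a b. a \<in> V \<and> b \<in> V \<and> (a = b \<or> (a, b) \<in> add_edge E u w) \<and>
        (\<forall>z\<in>V. z = a \<or> z = b \<or> (z, a) \<in> add_edge E u w \<or> (z, b) \<in> add_edge E u w)"

lemma gamma_c_3_no_dominating_pair: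
  assumes "gamma_c V E = 3" "sym E" "a \<in> V" "b \<in> V" "a = b \<or> (a, b) \<in> E"
  shows "\<exists>z\<in>V. z \<noteq> a \<and> z \<noteq> b \<and> (z, a) \<notin> E \<and> (z, b) \<notin> E"
proof (rule ccontr)
  assume "\<not> ?thesis"
  then have "\<forall>z\<in>V. z = a \<or> z = b \<or> (z, a) \<in> E \<or> (z, b) \<in> E" by blast
  then have "connected_dominating V E {a, b}"
    using assms(3-5) connected_dominating_pair_iff[OF assms(2)] by simp
  then have "3 \<le> card {a, b}" using gamma_c_le_card[of V E "{a, b}"] assms(1) by simp
  then show False by (simp add: card_insert_if split: if_splits)
qed

lemma vertex_critical_3_deletion_pair:
  assumes crit: "vertex_critical 3 V E" and x: "x \<in> V"
  obtains a b where "a \<in> V - {x}" "b \<in> V - {x}" "a = b \<or> (a, b) \<in> E"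
    "\<forall>z\<in>V. z = x \<or> z = a \<or> z = b \<or> (z, a) \<in> E \<or> (z, b) \<in> E"
proof -
  have "graph V E" and conn: "connected_set E (V - {x})"
    and less: "gamma_c (V - {x}) (delete_vertex V E x) < 3"
    using assms unfolding vertex_critical_def two_connected_def connected_graph_def by auto
  then have "sym E" "finite V" unfolding graph_def by auto
  let ?E = "delete_vertex V E x"
  have sub: "?E \<subseteq> E" and "sym ?E" and "induced ?E (V - {x}) = induced E (V - {x})"
    using \<open>sym E\<close> unfolding delete_vertex_def induced_def sym_def by auto
  then have "connected_dominating (V - {x}) ?E (V - {x})"
    using conn unfolding connected_dominating_def dominating_def connected_set_def by simp
  then obtain a b where "a \<in> V - {x}" "b \<in> V - {x}" "a = b \<or> (a, b) \<in> ?E"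
    "\<forall>z\<in>V - {x}. z = a \<or> z = b \<or> (z, a) \<in> ?E \<or> (z, b) \<in> ?E"
    using gamma_c_less_3_dominating_pair[OF _ \<open>sym ?E\<close> _ less] \<open>finite V\<close> by blast
  then show ?thesis using that sub by blast
qed

text \<open>A dominating pair of \<open>G - x\<close> containing a neighbour of \<open>x\<close> would dominate \<open>G\<close>, and a
  single dominating vertex of \<open>G - x\<close> together with a neighbour of \<open>x\<close> would as well.\<close>

lemma vertex_critical_3_deletion_edge:
  assumes crit: "vertex_critical 3 V E" and x: "x \<in> V"
  shows "\<exists>a b. a \<in> V \<and> b \<in> V \<and> (a, b) \<in> E \<and> a \<noteq> x \<and> b \<noteq> x \<and>
    (x, a) \<notin> E \<and> (x, b) \<notin> E \<and> (\<forall>z\<in>V. z = x \<or> z = a \<or> z = b \<or> (z, a) \<in> E \<or> (z, b) \<in> E)"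
proof -
  have G: "graph V E" "connected_set E V" "card V \<ge> 3" "gamma_c V E = 3"
    using crit unfolding vertex_critical_def two_connected_def connected_graph_def by auto
  then have "sym E" "irrefl E" "finite V" unfolding graph_def by auto
  obtain a b where ab: "a \<in> V - {x}" "b \<in> V - {x}" "a = b \<or> (a, b) \<in> E"
    and dom: "\<forall>z\<in>V. z = x \<or> z = a \<or> z = b \<or> (z, a) \<in> E \<or> (z, b) \<in> E"
    using vertex_critical_3_deletion_pair[OF crit x] by blast
  note no_pair = gamma_c_3_no_dominating_pair[OF G(4) \<open>sym E\<close>]
  have not_adj: "(x, a) \<notin> E" "(x, b) \<notin> E"
    using no_pair[of a b] ab dom by auto
  have "a \<noteq> b"
  proof
    assume "a = b"
    have "\<not> card V \<le> Suc 0" using G(3) by simp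
    then obtain y where "y \<in> V" "y \<noteq> x"
      using card_le_Suc0_iff_eq[OF \<open>finite V\<close>] x by metis
    then obtain z where z: "z \<in> V" "(x, z) \<in> E"
      using connected_set_imp_neighbour[OF G(2) x] by metis
    moreover have "z \<noteq> x" using z(2) \<open>irrefl E\<close> by (auto simp: irrefl_def)
    ultimately have "z = a \<or> (z, a) \<in> E" using dom \<open>a = b\<close> by blast
    then have "a = z \<or> (a, z) \<in> E" using \<open>sym E\<close> by (auto dest: symD)
    moreover have "\<forall>y\<in>V. y = a \<or> y = z \<or> (y, a) \<in> E \<or> (y, z) \<in> E"
      using dom z(2) \<open>a = b\<close> by auto
    ultimately show False using no_pair[of a z] ab(1) z(1) by blast
  qed
  then show ?thesis using ab dom not_adj by auto
qed

lemma edge_critical_3_addition_pair: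
  assumes crit: "edge_critical 3 V E"
    and uw: "u \<in> V" "w \<in> V" "u \<noteq> w" "(u, w) \<notin> E"
  shows "\<exists>a b. a \<in> V \<and> b \<in> V \<and> (a = b \<or> (a, b) \<in> add_edge E u w) \<and>
    (\<forall>z\<in>V. z = a \<or> z = b \<or> (z, a) \<in> add_edge E u w \<or> (z, b) \<in> add_edge E u w)"
proof -
  have G: "graph V E" "connected_set E V" and less: "gamma_c V (add_edge E u w) < 3"
    using crit uw unfolding edge_critical_def connected_graph_def by blast+
  have "sym E" "finite V" using G(1) unfolding graph_def by auto
  then have "sym (add_edge E u w)" unfolding add_edge_def sym_def by auto
  have "induced E V \<subseteq> induced (add_edge E u w) V" unfolding induced_def add_edge_def by auto
  then have "(induced E V)\<^sup>* \<subseteq> (induced (add_edge E u w) V)\<^sup>*" by (rule rtrancl_mono)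
  then have "connected_set (add_edge E u w) V"
    using G(2) unfolding connected_set_def by blast
  then have "connected_dominating V (add_edge E u w) V"
    unfolding connected_dominating_def dominating_def by blast
  then obtain a b where "a \<in> V" "b \<in> V" "a = b \<or> (a, b) \<in> add_edge E u w"
    "\<forall>z\<in>V. z = a \<or> z = b \<or> (z, a) \<in> add_edge E u w \<or> (z, b) \<in> add_edge E u w"
    by (rule gamma_c_less_3_dominating_pair[OF \<open>finite V\<close> \<open>sym (add_edge E u w)\<close> _ less])
  then show ?thesis by blast
qed

lemma maximal_vertex_critical_3_imp_max_gc3_critical:
  assumes "maximal_vertex_critical 3 V E"
  shows "max_gc3_critical V E"
proof -
  have crit: "vertex_critical 3 V E" "edge_critical 3 V E"
    using assms unfolding maximal_vertex_critical_def by blast+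
  then have G: "graph V E" "card V \<ge> 3" "gamma_c V E = 3"
    unfolding vertex_critical_def two_connected_def connected_graph_def by auto
  then have "finite V" "E \<subseteq> V \<times> V" "sym E" "irrefl E" "V \<noteq> {}"
    unfolding graph_def by auto
  show ?thesis
  proof
    show "(y, x) \<in> E" if "(x, y) \<in> E" for x y using symD[OF \<open>sym E\<close> that] .
    show "(x, x) \<notin> E" for x using \<open>irrefl E\<close> by (simp add: irrefl_def)
  qed (fact \<open>finite V\<close> \<open>E \<subseteq> V \<times> V\<close> \<open>V \<noteq> {}\<close>
      gamma_c_3_no_dominating_pair[OF G(3) \<open>sym E\<close>]
      vertex_critical_3_deletion_edge[OF crit(1)]
      edge_critical_3_addition_pair[OF crit(2)])+
qed

section \<open>Independence number, clique number and isomorphism\<close>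

lemma independentD: "independent E S \<Longrightarrow> x \<in> S \<Longrightarrow> y \<in> S \<Longrightarrow> (x, y) \<notin> E"
  unfolding independent_def by blast

lemma cliqueD: "clique E C \<Longrightarrow> x \<in> C \<Longrightarrow> y \<in> C \<Longrightarrow> x \<noteq> y \<Longrightarrow> (x, y) \<in> E"
  unfolding clique_def by blast

lemma independent_Int_clique_subset_singleton:
  assumes "independent E S" "clique E C"
  obtains c where "S \<inter> C \<subseteq> {c}"
  using assms unfolding independent_def clique_def by blast

lemma finite_card_subsets:
  assumes "finite V"
  shows "finite {card T | T. T \<subseteq> V \<and> P T}"
proof (rule finite_subset)
  show "{card T | T. T \<subseteq> V \<and> P T} \<subseteq> card ` Pow V" by blast
  show "finite (card ` Pow V)" using assms by simp
qed

lemma card_le_Max_card_subsets: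
  assumes "finite V" "S \<subseteq> V" "P S"
  shows "card S \<le> Max {card T | T. T \<subseteq> V \<and> P T}"
proof (rule Max_ge)
  show "finite {card T | T. T \<subseteq> V \<and> P T}" by (rule finite_card_subsets[OF assms(1)])
  show "card S \<in> {card T | T. T \<subseteq> V \<and> P T}" using assms(2,3) by blast
qed

lemma Max_card_subsets_attained:
  assumes "finite V" "P {}"
  obtains S where "S \<subseteq> V" "P S" "card S = Max {card T | T. T \<subseteq> V \<and> P T}"
proof -
  let ?M = "{card T | T. T \<subseteq> V \<and> P T}"
  have "card {} \<in> ?M" using assms(2) by (intro CollectI exI[of _ "{}"]) simp
  then have "?M \<noteq> {}" by blast
  then have "Max ?M \<in> ?M" by (rule Max_in[OF finite_card_subsets[OF assms(1)]])
  then obtain S where "Max ?M = card S" "S \<subseteq> V" "P S" by blast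
  then show ?thesis using that by simp
qed

lemma card_le_independence_number:
  "finite V \<Longrightarrow> S \<subseteq> V \<Longrightarrow> independent E S \<Longrightarrow> card S \<le> independence_number V E"
  unfolding independence_number_def by (rule card_le_Max_card_subsets)

lemma card_le_clique_number:
  "finite V \<Longrightarrow> S \<subseteq> V \<Longrightarrow> clique E S \<Longrightarrow> card S \<le> clique_number V E"
  unfolding clique_number_def by (rule card_le_Max_card_subsets)

lemma independence_number_attained:
  assumes "finite V"
  obtains S where "S \<subseteq> V" "independent E S" "card S = independence_number V E"
proof -
  have "independent E {}" unfolding independent_def by blast
  with assms obtain S where "S \<subseteq> V" "independent E S" "card S = independence_number V E"
    unfolding independence_number_def by (rule Max_card_subsets_attained[where P = "independent E"])
  then show ?thesis by (rule that)
qed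

lemma clique_number_attained:
  assumes "finite V"
  obtains S where "S \<subseteq> V" "clique E S" "card S = clique_number V E"
proof -
  have "clique E {}" unfolding clique_def by blast
  with assms obtain S where "S \<subseteq> V" "clique E S" "card S = clique_number V E"
    unfolding clique_number_def by (rule Max_card_subsets_attained[where P = "clique E"])
  then show ?thesis by (rule that)
qed

lemma graph_isoE:
  assumes "graph_iso V E V' E'"
  obtains f where "bij_betw f V V'"
    and "\<And>u w. u \<in> V \<Longrightarrow> w \<in> V \<Longrightarrow> (f u, f w) \<in> E' \<longleftrightarrow> (u, w) \<in> E"
  using assms unfolding graph_iso_def by blast

lemma graph_iso_sym:
  assumes "graph_iso V E V' E'"
  shows "graph_iso V' E' V E"
proof -
  obtain f where f: "bij_betw f V V'"
    and edges: "\<And>u w. u \<in> V \<Longrightarrow> w \<in> V \<Longrightarrow> (f u, f w) \<in> E' \<longleftrightarrow> (u, w) \<in> E"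
    using graph_isoE[OF assms] by blast
  let ?g = "inv_into V f"
  have g: "bij_betw ?g V' V" using f by (rule bij_betw_inv_into)
  have "(u, w) \<in> E' \<longleftrightarrow> (?g u, ?g w) \<in> E" if "u \<in> V'" "w \<in> V'" for u w
  proof -
    have "?g u \<in> V" "?g w \<in> V" using bij_betw_apply[OF g] that by blast+
    then have "(f (?g u), f (?g w)) \<in> E' \<longleftrightarrow> (?g u, ?g w) \<in> E" by (rule edges)
    then show ?thesis using bij_betw_inv_into_right[OF f] that by simp
  qed
  with g show ?thesis unfolding graph_iso_def by blast
qed

lemma graph_iso_imageE:
  assumes "graph_iso V E V' E'"
  obtains f where "\<And>S. S \<subseteq> V \<Longrightarrow> f ` S \<subseteq> V'" "\<And>S. S \<subseteq> V \<Longrightarrow> card (f ` S) = card S"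
    "\<And>S. S \<subseteq> V \<Longrightarrow> independent E S \<Longrightarrow> independent E' (f ` S)"
    "\<And>S. S \<subseteq> V \<Longrightarrow> clique E S \<Longrightarrow> clique E' (f ` S)"
proof -
  obtain f where f: "bij_betw f V V'"
    and edges: "\<And>u w. u \<in> V \<Longrightarrow> w \<in> V \<Longrightarrow> (f u, f w) \<in> E' \<longleftrightarrow> (u, w) \<in> E"
    using graph_isoE[OF assms] by blast
  show ?thesis
  proof (rule that)
    fix S assume S: "S \<subseteq> V"
    show "f ` S \<subseteq> V'" using S bij_betw_imp_surj_on[OF f] by blast
    have "inj_on f S" using f S unfolding bij_betw_def by (rule inj_on_subset[OF conjunct1])
    then show "card (f ` S) = card S" by (rule card_image)
    show "independent E' (f ` S)" if "independent E S"
      using that unfolding independent_def by (auto simp: edges[OF subsetD[OF S] subsetD[OF S]])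
    show "clique E' (f ` S)" if "clique E S"
      using that unfolding clique_def by (auto simp: edges[OF subsetD[OF S] subsetD[OF S]])
  qed
qed

lemma graph_iso_independence_number_le:
  assumes "graph_iso V E V' E'" "finite V" "finite V'"
  shows "independence_number V E \<le> independence_number V' E'"
proof -
  obtain f where f: "\<And>S. S \<subseteq> V \<Longrightarrow> f ` S \<subseteq> V'" "\<And>S. S \<subseteq> V \<Longrightarrow> card (f ` S) = card S"
    "\<And>S. S \<subseteq> V \<Longrightarrow> independent E S \<Longrightarrow> independent E' (f ` S)"
    using graph_iso_imageE[OF assms(1)] by metis
  obtain S where "S \<subseteq> V" "independent E S" "card S = independence_number V E"
    using independence_number_attained[OF assms(2)] by blast
  then show ?thesis using card_le_independence_number[OF assms(3) f(1,3)] f(2) by metis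
qed

lemma graph_iso_clique_number_le:
  assumes "graph_iso V E V' E'" "finite V" "finite V'"
  shows "clique_number V E \<le> clique_number V' E'"
proof -
  obtain f where f: "\<And>S. S \<subseteq> V \<Longrightarrow> f ` S \<subseteq> V'" "\<And>S. S \<subseteq> V \<Longrightarrow> card (f ` S) = card S"
    "\<And>S. S \<subseteq> V \<Longrightarrow> clique E S \<Longrightarrow> clique E' (f ` S)"
    using graph_iso_imageE[OF assms(1)] by metis
  obtain S where "S \<subseteq> V" "clique E S" "card S = clique_number V E"
    using clique_number_attained[OF assms(2)] by blast
  then show ?thesis using card_le_clique_number[OF assms(3) f(1,3)] f(2) by metis
qed

lemma graph_iso_parameters:
  assumes "graph_iso V E V' E'" "finite V"
  shows "independence_number V E = independence_number V' E'"
    and "clique_number V E = clique_number V' E'"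
    and "card V = card V'"
proof -
  obtain f where f: "bij_betw f V V'" using graph_isoE[OF assms(1)] by blast
  then show "card V = card V'" by (rule bij_betw_same_card)
  have "finite V'" using f assms(2) bij_betw_finite by blast
  note iso' = graph_iso_sym[OF assms(1)]
  show "independence_number V E = independence_number V' E'"
    using graph_iso_independence_number_le[OF assms \<open>finite V'\<close>]
      graph_iso_independence_number_le[OF iso' \<open>finite V'\<close> assms(2)]
    by (rule antisym)
  show "clique_number V E = clique_number V' E'"
    using graph_iso_clique_number_le[OF assms \<open>finite V'\<close>]
      graph_iso_clique_number_le[OF iso' \<open>finite V'\<close> assms(2)]
    by (rule antisym)
qed

section \<open>The graphs \<open>G\<^sub>1(l)\<close>\<close>

lemma g1_E_simps [simp]:
  "(Vtx, Z i) \<in> g1_E l \<longleftrightarrow> i \<in> {1..l}"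
  "(Z i, Vtx) \<in> g1_E l \<longleftrightarrow> i \<in> {1..l}"
  "(Vtx, Vtx) \<notin> g1_E l"
  "(Vtx, Q i) \<notin> g1_E l"
  "(Q i, Vtx) \<notin> g1_E l"
  "(Z i, Z j) \<notin> g1_E l"
  "(Q i, Q j) \<in> g1_E l \<longleftrightarrow> i \<in> {1..l} \<and> j \<in> {1..l} \<and> i \<noteq> j"
  "(Z i, Q j) \<in> g1_E l \<longleftrightarrow> i \<in> {1..l} \<and> j \<in> {1..l} \<and> i \<noteq> j"
  "(Q j, Z i) \<in> g1_E l \<longleftrightarrow> i \<in> {1..l} \<and> j \<in> {1..l} \<and> i \<noteq> j"
  unfolding g1_E_def by auto

lemma g1_V_simps [simp]:
  "Vtx \<in> g1_V l" "Q i \<in> g1_V l \<longleftrightarrow> i \<in> {1..l}" "Z i \<in> g1_V l \<longleftrightarrow> i \<in> {1..l}"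
  unfolding g1_V_def by auto

lemma finite_g1_V [simp]: "finite (g1_V l)"
  unfolding g1_V_def by simp

lemma card_g1_V: "card (g1_V l) = 2 * l + 1"
proof -
  have "g1_V l = insert Vtx (Q ` {1..l} \<union> Z ` {1..l})" unfolding g1_V_def by auto
  moreover have "card (Q ` {1..l} \<union> Z ` {1..l}) = l + l"
    by (subst card_Un_disjoint) (auto simp: card_image inj_on_def)
  moreover have "Vtx \<notin> Q ` {1..l} \<union> Z ` {1..l}" by auto
  ultimately show ?thesis by simp
qed

lemma g1_independent_card_le_2:
  assumes S: "S \<subseteq> g1_V l" "independent (g1_E l) S" and not_Z: "\<not> S \<subseteq> Z ` {1..l}"
  shows "card S \<le> 2"
proof -
  have nonadj: "(x, y) \<notin> g1_E l" if "x \<in> S" "y \<in> S" for x y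
    using independentD[OF S(2) that] .
  have in_V: "x \<in> g1_V l" if "x \<in> S" for x using S(1) that by blast
  consider (vtx) "Vtx \<in> S" | (q) i where "Vtx \<notin> S" "Q i \<in> S"
    using not_Z in_V by (metis g1v.exhaust imageI subsetI g1_V_simps(3))
  then show ?thesis
  proof cases
    case vtx
    have "S \<subseteq> insert Vtx (S \<inter> Q ` {1..l})"
    proof
      fix x assume x: "x \<in> S"
      then show "x \<in> insert Vtx (S \<inter> Q ` {1..l})"
        using in_V[OF x] nonadj[OF vtx x] by (cases x) auto
    qed
    moreover obtain c where "S \<inter> Q ` {1..l} \<subseteq> {c}"
      using independent_Int_clique_subset_singleton[OF S(2), of "Q ` {1..l}"]
      unfolding clique_def by auto
    ultimately have "card S \<le> card {Vtx, c}" by (intro card_mono) auto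
    then show ?thesis by (simp add: card_insert_if split: if_splits)
  next
    case q
    have "S \<subseteq> {Q i, Z i}"
    proof
      fix x assume x: "x \<in> S"
      then show "x \<in> {Q i, Z i}"
        using q(1) in_V[OF x] in_V[OF q(2)] nonadj[OF q(2) x] by (cases x) auto
    qed
    then have "card S \<le> card {Q i, Z i}" by (intro card_mono) auto
    then show ?thesis by (simp add: card_insert_if split: if_splits)
  qed
qed

lemma g1_independent_card_le:
  assumes "l \<ge> 2" "S \<subseteq> g1_V l" "independent (g1_E l) S"
  shows "card S \<le> l"
proof (cases "S \<subseteq> Z ` {1..l}")
  case True
  then have "card S \<le> card (Z ` {1..l})" by (intro card_mono) auto
  also have "\<dots> \<le> l" using card_image_le[of "{1..l}" Z] by simp
  finally show ?thesis .
next
  case False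
  then show ?thesis using g1_independent_card_le_2[OF assms(2,3)] assms(1) by simp
qed

lemma g1_clique_card_le:
  assumes l: "l \<ge> 2" and K: "K \<subseteq> g1_V l" "clique (g1_E l) K"
  shows "card K \<le> l"
proof -
  have adj: "(x, y) \<in> g1_E l" if "x \<in> K" "y \<in> K" "x \<noteq> y" for x y
    using cliqueD[OF K(2) that] .
  have in_V: "x \<in> g1_V l" if "x \<in> K" for x using K(1) that by blast
  show ?thesis
  proof (cases "Vtx \<in> K")
    case True
    have "K \<subseteq> insert Vtx (Z ` {1..l} \<inter> K)"
    proof
      fix x assume x: "x \<in> K"
      then show "x \<in> insert Vtx (Z ` {1..l} \<inter> K)"
        using in_V[OF x] adj[OF True x] by (cases x) auto
    qed
    moreover obtain c where "Z ` {1..l} \<inter> K \<subseteq> {c}"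
      using independent_Int_clique_subset_singleton[OF _ K(2), of "Z ` {1..l}"]
      unfolding independent_def by auto
    ultimately have "card K \<le> card {Vtx, c}" by (intro card_mono) auto
    then show ?thesis using l by (simp add: card_insert_if split: if_splits)
  next
    case False
    define idx where "idx x = (case x of Vtx \<Rightarrow> 0 | Q i \<Rightarrow> i | Z i \<Rightarrow> i)" for x
    have "inj_on idx K"
    proof (rule inj_onI)
      fix x y assume x: "x \<in> K" and y: "y \<in> K" and "idx x = idx y"
      then show "x = y"
        using False adj[OF x y] by (cases x; cases y) (auto simp: idx_def)
    qed
    moreover have "idx ` K \<subseteq> {1..l}"
    proof
      fix i assume "i \<in> idx ` K"
      then obtain x where x: "x \<in> K" "i = idx x" by blast
      then show "i \<in> {1..l}" using False in_V[OF x(1)] by (cases x) (auto simp: idx_def)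
    qed
    ultimately show ?thesis using card_inj_on_le[of idx K "{1..l}"] by simp
  qed
qed

lemma independence_number_g1:
  assumes "l \<ge> 2"
  shows "independence_number (g1_V l) (g1_E l) = l"
proof (rule antisym)
  obtain S where "S \<subseteq> g1_V l" "independent (g1_E l) S" "card S = independence_number (g1_V l) (g1_E l)"
    using independence_number_attained[OF finite_g1_V] by blast
  then show "independence_number (g1_V l) (g1_E l) \<le> l"
    using g1_independent_card_le[OF assms] by metis
  have "Z ` {1..l} \<subseteq> g1_V l" "independent (g1_E l) (Z ` {1..l})"
    unfolding independent_def by auto
  then have "card (Z ` {1..l}) \<le> independence_number (g1_V l) (g1_E l)"
    by (intro card_le_independence_number) simp_all
  then show "l \<le> independence_number (g1_V l) (g1_E l)"
    by (simp add: card_image inj_on_def)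
qed

lemma clique_number_g1:
  assumes "l \<ge> 2"
  shows "clique_number (g1_V l) (g1_E l) = l"
proof (rule antisym)
  obtain K where "K \<subseteq> g1_V l" "clique (g1_E l) K" "card K = clique_number (g1_V l) (g1_E l)"
    using clique_number_attained[OF finite_g1_V] by blast
  then show "clique_number (g1_V l) (g1_E l) \<le> l"
    using g1_clique_card_le[OF assms] by metis
  have "Q ` {1..l} \<subseteq> g1_V l" "clique (g1_E l) (Q ` {1..l})"
    unfolding clique_def by auto
  then have "card (Q ` {1..l}) \<le> clique_number (g1_V l) (g1_E l)"
    by (intro card_le_clique_number) simp_all
  then show "l \<le> clique_number (g1_V l) (g1_E l)"
    by (simp add: card_image inj_on_def)
qed

lemma bij_betw_g1_labelling:
  assumes q: "bij_betw q {1..l} C" and z: "bij_betw z {1..l} S"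
    and disj: "r \<notin> S" "r \<notin> C" "S \<inter> C = {}"
  shows "bij_betw (case_g1v r q z) (g1_V l) (insert r (S \<union> C))"
proof -
  have q_eq [simp]: "q i = q j \<longleftrightarrow> i = j" and z_eq [simp]: "z i = z j \<longleftrightarrow> i = j"
    if "i \<in> {1..l}" "j \<in> {1..l}" for i j
    using inj_on_eq_iff[OF bij_betw_imp_inj_on[OF q] that]
      inj_on_eq_iff[OF bij_betw_imp_inj_on[OF z] that] by simp_all
  have distinct [simp]: "q i \<noteq> z j" "z j \<noteq> q i" "q i \<noteq> r" "r \<noteq> q i" "z j \<noteq> r" "r \<noteq> z j"
    if "i \<in> {1..l}" "j \<in> {1..l}" for i j
    using bij_betw_apply[OF q that(1)] bij_betw_apply[OF z that(2)] disj
    by (metis IntI empty_iff)+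
  have "inj_on (case_g1v r q z) (g1_V l)"
  proof (rule inj_onI)
    fix x y assume "x \<in> g1_V l" "y \<in> g1_V l" "case_g1v r q z x = case_g1v r q z y"
    then show "x = y" by (cases x; cases y) auto
  qed
  moreover have "case_g1v r q z ` g1_V l = insert r (S \<union> C)"
    using bij_betw_imp_surj_on[OF q] bij_betw_imp_surj_on[OF z]
    unfolding g1_V_def by (auto simp: image_Un image_image)
  ultimately show ?thesis unfolding bij_betw_def by blast
qed

lemma in_G1I:
  assumes V: "V = insert r (S \<union> C)" and disj: "r \<notin> S" "r \<notin> C" "S \<inter> C = {}"
    and "finite C" and \<sigma>: "bij_betw \<sigma> C S"
    and "clique E C" "independent E S" "sym E" "irrefl E"
    and r_S: "\<And>s. s \<in> S \<Longrightarrow> (r, s) \<in> E" and r_C: "\<And>c. c \<in> C \<Longrightarrow> (r, c) \<notin> E"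
    and C_\<sigma>: "\<And>v w. v \<in> C \<Longrightarrow> w \<in> C \<Longrightarrow> (w, \<sigma> v) \<in> E \<longleftrightarrow> w \<noteq> v"
  shows "in_G1 (card C) V E"
proof -
  define l where "l = card C"
  obtain q where q: "bij_betw q {1..l} C"
    using ex_bij_betw_nat_finite_1[OF \<open>finite C\<close>] unfolding l_def by blast
  define z where "z = \<sigma> \<circ> q"
  have z: "bij_betw z {1..l} S" unfolding z_def using q \<sigma> by (rule bij_betw_trans)
  have E_sym: "(x, y) \<in> E \<longleftrightarrow> (y, x) \<in> E" for x y
    using \<open>sym E\<close> unfolding sym_def by blast
  have "(r, r) \<notin> E" using \<open>irrefl E\<close> unfolding irrefl_def by blast
  have C: "q i \<in> C" and S: "z i \<in> S" if "i \<in> {1..l}" for i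
    using bij_betw_apply[OF q that] bij_betw_apply[OF z that] by blast+
  have r_edges: "(r, z i) \<in> E" "(z i, r) \<in> E" "(r, q i) \<notin> E" "(q i, r) \<notin> E"
    if "i \<in> {1..l}" for i
    using r_S[OF S[OF that]] r_C[OF C[OF that]] E_sym by blast+
  have q_z_edges: "(q i, q j) \<in> E \<longleftrightarrow> i \<noteq> j" "(z i, z j) \<notin> E"
    "(q i, z j) \<in> E \<longleftrightarrow> i \<noteq> j" "(z j, q i) \<in> E \<longleftrightarrow> i \<noteq> j"
    if "i \<in> {1..l}" "j \<in> {1..l}" for i j
  proof -
    have "q i = q j \<longleftrightarrow> i = j"
      using inj_on_eq_iff[OF bij_betw_imp_inj_on[OF q] that] .
    then show "(q i, q j) \<in> E \<longleftrightarrow> i \<noteq> j" "(q i, z j) \<in> E \<longleftrightarrow> i \<noteq> j"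
      "(z j, q i) \<in> E \<longleftrightarrow> i \<noteq> j"
      using C[OF that(1)] C[OF that(2)] C_\<sigma>[of "q j" "q i"] \<open>clique E C\<close> \<open>irrefl E\<close> E_sym
      unfolding clique_def irrefl_def z_def by auto
    show "(z i, z j) \<notin> E"
      using S[OF that(1)] S[OF that(2)] \<open>independent E S\<close> unfolding independent_def by blast
  qed
  have "(case_g1v r q z x, case_g1v r q z y) \<in> E \<longleftrightarrow> (x, y) \<in> g1_E l"
    if "x \<in> g1_V l" "y \<in> g1_V l" for x y
    using that \<open>(r, r) \<notin> E\<close> r_edges q_z_edges by (cases x; cases y) auto
  with bij_betw_g1_labelling[OF q z disj] have "graph_iso (g1_V l) (g1_E l) V E"
    unfolding graph_iso_def V by blast
  then show ?thesis unfolding in_G1_def l_def by (rule graph_iso_sym)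
qed

lemma in_G1_independence_number_plus_clique_number:
  assumes "in_G1 l V E" "l \<ge> 2" "finite V"
  shows "independence_number V E + clique_number V E = card V - 1"
proof -
  have iso: "graph_iso V E (g1_V l) (g1_E l)" using assms(1) unfolding in_G1_def .
  show ?thesis
    using graph_iso_parameters[OF iso assms(3)] independence_number_g1[OF assms(2)]
      clique_number_g1[OF assms(2)] card_g1_V by simp
qed

section \<open>Independent sets and cliques in critical graphs\<close>

context max_gc3_critical
begin

lemma edge_in_V: "(x, y) \<in> E \<Longrightarrow> x \<in> V \<and> y \<in> V"
  using edges_in_V by blast

lemma vertex_deletionE:
  assumes "x \<in> V"
  obtains a b where "a \<in> V" "b \<in> V" "(a, b) \<in> E" "a \<noteq> x" "b \<noteq> x" "(x, a) \<notin> E" "(x, b) \<notin> E"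
    "\<forall>z\<in>V. z = x \<or> z = a \<or> z = b \<or> (z, a) \<in> E \<or> (z, b) \<in> E"
  using vertex_deletion[OF assms] by blast

lemma vertex_deletion_clique:
  assumes "clique E C" "x \<in> C" "C \<subseteq> V"
  obtains a b where "a \<in> V" "b \<in> V" "(a, b) \<in> E" "a \<notin> C" "b \<notin> C" "(x, a) \<notin> E" "(x, b) \<notin> E"
    "\<forall>z\<in>V. z = x \<or> z = a \<or> z = b \<or> (z, a) \<in> E \<or> (z, b) \<in> E"
proof -
  obtain a b where ab: "a \<in> V" "b \<in> V" "(a, b) \<in> E" "a \<noteq> x" "b \<noteq> x" "(x, a) \<notin> E" "(x, b) \<notin> E"
    and dom: "\<forall>z\<in>V. z = x \<or> z = a \<or> z = b \<or> (z, a) \<in> E \<or> (z, b) \<in> E"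
    using vertex_deletionE assms(2,3) by blast
  have "a \<notin> C" "b \<notin> C" using cliqueD[OF assms(1,2)] ab by blast+
  with ab dom show ?thesis using that by blast
qed

lemma two_le_clique_number: "2 \<le> clique_number V E"
proof -
  obtain x where "x \<in> V" using V_nonempty by blast
  then obtain a b where ab: "a \<in> V" "b \<in> V" "(a, b) \<in> E" by (rule vertex_deletionE)
  then have "clique E {a, b}" unfolding clique_def using edge_sym by blast
  then have "card {a, b} \<le> clique_number V E"
    using ab(1,2) finite_V by (intro card_le_clique_number) auto
  moreover have "a \<noteq> b" using ab(3) edge_irrefl by blast
  ultimately show ?thesis by simp
qed

lemma disjoint_cover_leaves_vertex:
  assumes "independent E S" "clique E C" "C \<subseteq> V" "C \<noteq> {}"
  shows "V - (S \<union> C) \<noteq> {}"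
proof
  assume cover: "V - (S \<union> C) = {}"
  obtain v where "v \<in> C" using assms(4) by blast
  then obtain a b where "a \<in> V" "b \<in> V" "(a, b) \<in> E" "a \<notin> C" "b \<notin> C"
    using vertex_deletion_clique assms(2,3) by metis
  then show False using cover independentD[OF assms(1)] by blast
qed

text \<open>Deleting a second clique vertex forces \<open>c\<close> to be adjacent to \<open>r\<close>; deleting \<open>c\<close> then
  leaves no room for the dominating edge.\<close>

lemma overlapping_cover_leaves_two_vertices:
  assumes S: "independent E S" and C: "clique E C" "C \<subseteq> V"
    and overlap: "S \<inter> C = {c}" and v: "v \<in> C" "v \<noteq> c"
  shows "\<not> V \<subseteq> insert r (S \<union> C)"
proof
  assume cover: "V \<subseteq> insert r (S \<union> C)"
  have c: "c \<in> S" "c \<in> C" "c \<in> V" using overlap C(2) by auto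
  obtain a b where ab: "a \<in> V" "b \<in> V" "(a, b) \<in> E" "a \<notin> C" "b \<notin> C"
    and dom: "\<forall>z\<in>V. z = v \<or> z = a \<or> z = b \<or> (z, a) \<in> E \<or> (z, b) \<in> E"
    using vertex_deletion_clique[OF C(1) v(1) C(2)] by metis
  moreover have "c \<noteq> a" "c \<noteq> b" using ab(4,5) c(2) by blast+
  ultimately have "(c, a) \<in> E \<or> (c, b) \<in> E" using c(3) v(2) by auto
  moreover have "a \<in> S \<or> a = r" "b \<in> S \<or> b = r" using ab cover by blast+
  ultimately have "(c, r) \<in> E" using independentD[OF S c(1)] by blast
  moreover obtain a' b' where "a' \<in> V" "b' \<in> V" "(a', b') \<in> E" "a' \<notin> C" "b' \<notin> C"
    "(c, a') \<notin> E" "(c, b') \<notin> E"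
    using vertex_deletion_clique[OF C(1) c(2) C(2)] by metis
  ultimately show False using cover independentD[OF S] by blast
qed

end

locale split_but_one = max_gc3_critical +
  fixes S C r
  assumes independent_S: "independent E S" and clique_C: "clique E C"
    and cover: "V = insert r (S \<union> C)"
    and r_notin: "r \<notin> S" "r \<notin> C" and S_C_disjoint: "S \<inter> C = {}"
    and two_le_card_C: "2 \<le> card C"
begin

lemma subsets_V: "S \<subseteq> V" "C \<subseteq> V" "r \<in> V"
  using cover by auto

lemma clique_vertex_deletion:
  assumes "v \<in> C"
  shows clique_nonadj_r: "(v, r) \<notin> E"
    and mate_exists: "\<exists>s\<in>S. (r, s) \<in> E \<and> (v, s) \<notin> E \<and>
      (\<forall>z\<in>V. z = v \<or> z = r \<or> z = s \<or> (z, r) \<in> E \<or> (z, s) \<in> E)"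
proof -
  obtain a b where ab: "(a, b) \<in> E" "a \<notin> C" "b \<notin> C" "(v, a) \<notin> E" "(v, b) \<notin> E"
    and dom: "\<forall>z\<in>V. z = v \<or> z = a \<or> z = b \<or> (z, a) \<in> E \<or> (z, b) \<in> E"
    using vertex_deletion_clique[OF clique_C assms subsets_V(2)] edge_in_V by metis
  then have "a \<in> S \<or> a = r" "b \<in> S \<or> b = r" using cover edge_in_V by blast+
  moreover have "a \<noteq> b" using ab(1) edge_irrefl by blast
  ultimately consider "a = r" "b \<in> S" | "a \<in> S" "b = r"
    using independentD[OF independent_S] ab(1) by blast
  then show "(v, r) \<notin> E" "\<exists>s\<in>S. (r, s) \<in> E \<and> (v, s) \<notin> E \<and>
    (\<forall>z\<in>V. z = v \<or> z = r \<or> z = s \<or> (z, r) \<in> E \<or> (z, s) \<in> E)"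
    by (cases; use ab dom edge_sym in blast)+
qed

text \<open>For \<open>v = q\<^sub>i\<close>, \<open>mate v\<close> is \<open>z\<^sub>i\<close>: the unique non-neighbour of \<open>v\<close> in \<open>S\<close>
  (\<open>adj_mate_iff\<close>).\<close>

definition mate :: "'a \<Rightarrow> 'a" where
  "mate v = (SOME s. s \<in> S \<and> (r, s) \<in> E \<and> (v, s) \<notin> E \<and>
    (\<forall>z\<in>V. z = v \<or> z = r \<or> z = s \<or> (z, r) \<in> E \<or> (z, s) \<in> E))"

lemma mate:
  assumes "v \<in> C"
  shows "mate v \<in> S" "(r, mate v) \<in> E" "(v, mate v) \<notin> E"
    "\<forall>z\<in>V. z = v \<or> z = r \<or> z = mate v \<or> (z, r) \<in> E \<or> (z, mate v) \<in> E"
  using someI_ex[OF mate_exists[OF assms, unfolded Bex_def]]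
  unfolding mate_def by blast+

lemma r_adj_S:
  assumes s: "s \<in> S"
  shows "(r, s) \<in> E"
proof -
  have "C \<noteq> {}" using two_le_card_C by auto
  then obtain v where v: "v \<in> C" by blast
  show ?thesis
  proof (cases "s = mate v")
    case True
    then show ?thesis using mate(2)[OF v] by simp
  next
    case False
    have "s \<noteq> v" "s \<noteq> r" using s v S_C_disjoint r_notin by blast+
    moreover have "(s, mate v) \<notin> E" using independentD[OF independent_S s mate(1)[OF v]] .
    moreover have "s \<in> V" using s subsets_V by blast
    ultimately have "(s, r) \<in> E" using mate(4)[OF v] False by blast
    then show ?thesis by (rule edge_sym)
  qed
qed

lemma r_neighbour_in_S:
  assumes "(r, x) \<in> E"
  shows "x \<in> S"
proof -
  have "x \<in> V" "x \<noteq> r" using assms edge_in_V edge_irrefl by blast+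
  moreover have "x \<notin> C" using assms clique_nonadj_r edge_sym[of r x] by blast
  ultimately show ?thesis using cover by blast
qed

lemma adj_mate_iff:
  assumes "v \<in> C" "w \<in> C"
  shows "(w, mate v) \<in> E \<longleftrightarrow> w \<noteq> v"
proof
  show "w \<noteq> v" if "(w, mate v) \<in> E" using that mate(3)[OF assms(1)] by blast
next
  assume "w \<noteq> v"
  moreover have "w \<noteq> r" "w \<noteq> mate v" using assms r_notin S_C_disjoint mate(1) by blast+
  ultimately show "(w, mate v) \<in> E"
    using mate(4)[OF assms(1)] clique_nonadj_r[OF assms(2)] assms(2) subsets_V by blast
qed

lemma inj_on_mate: "inj_on mate C"
  by (rule inj_onI) (metis adj_mate_iff)

text \<open>For \<open>t\<close> outside the image of \<open>mate\<close>, such an edge would leave \<open>mate b\<close> undominated.\<close>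

lemma unmated_no_dominating_edge:
  assumes t: "t \<in> S" "t \<notin> mate ` C"
    and ab: "(a, b) \<in> E" "(r, a) \<in> E" "(t, b) \<notin> E" "b \<in> V"
    and dom: "\<forall>z\<in>V. z = t \<or> z = a \<or> z = b \<or> (z, a) \<in> E \<or> (z, b) \<in> E"
  shows False
proof -
  have a: "a \<in> S" using ab(2) by (rule r_neighbour_in_S)
  have "b \<notin> S" using independentD[OF independent_S a] ab(1) by blast
  moreover have "b \<noteq> r" using ab(3) edge_sym[OF r_adj_S[OF t(1)]] by blast
  ultimately have b: "b \<in> C" using ab(4) cover by blast
  have "mate b \<noteq> t" using t(2) b by blast
  moreover have "mate b \<noteq> a" using mate(3)[OF b] edge_sym[OF ab(1)] by blast
  moreover have "mate b \<noteq> b" using mate(1)[OF b] b S_C_disjoint by auto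
  moreover have "(mate b, a) \<notin> E" using independentD[OF independent_S mate(1)[OF b] a] .
  moreover have "(mate b, b) \<notin> E" using mate(3)[OF b] edge_sym[of "mate b" b] by blast
  moreover have "mate b \<in> V" using mate(1)[OF b] subsets_V by blast
  ultimately show False using bspec[OF dom] by blast
qed

lemma mate_image: "mate ` C = S"
proof
  show "mate ` C \<subseteq> S" using mate(1) by blast
  show "S \<subseteq> mate ` C"
  proof
    fix t assume t: "t \<in> S"
    show "t \<in> mate ` C"
    proof (rule ccontr)
      assume unmated: "t \<notin> mate ` C"
      have "t \<in> V" using t subsets_V by blast
      then obtain a b where ab: "a \<in> V" "b \<in> V" "(a, b) \<in> E" "a \<noteq> t" "b \<noteq> t"
        "(t, a) \<notin> E" "(t, b) \<notin> E"
        and dom: "\<forall>z\<in>V. z = t \<or> z = a \<or> z = b \<or> (z, a) \<in> E \<or> (z, b) \<in> E"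
        by (rule vertex_deletionE)
      have "(t, r) \<in> E" using edge_sym[OF r_adj_S[OF t]] .
      then have "r \<noteq> t" "r \<noteq> a" "r \<noteq> b" using ab(6,7) edge_irrefl by blast+
      then have "(r, a) \<in> E \<or> (r, b) \<in> E" using dom subsets_V(3) by blast
      then show False
      proof
        assume "(r, a) \<in> E"
        then show False using unmated_no_dominating_edge[OF t unmated ab(3)] ab dom by blast
      next
        assume "(r, b) \<in> E"
        moreover have "\<forall>z\<in>V. z = t \<or> z = b \<or> z = a \<or> (z, b) \<in> E \<or> (z, a) \<in> E" using dom by blast
        ultimately show False
          using unmated_no_dominating_edge[OF t unmated edge_sym[OF ab(3)]] ab by blast
      qed
    qed
  qed
qed

lemma in_G1: "in_G1 (card C) V E"
proof (rule in_G1I[OF cover r_notin S_C_disjoint])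
  show "finite C" using subsets_V(2) finite_V finite_subset by blast
  show "bij_betw mate C S" unfolding bij_betw_def using inj_on_mate mate_image by blast
  show "sym E" by (rule symI) (rule edge_sym)
  show "irrefl E" by (rule irreflI) (rule edge_irrefl)
  show "(r, c) \<notin> E" if "c \<in> C" for c using clique_nonadj_r[OF that] edge_sym[of r c] by blast
qed (fact independent_S clique_C r_adj_S adj_mate_iff)+

end

locale split_but_two = max_gc3_critical +
  fixes S C c r1 r2
  assumes independent_S: "independent E S" and clique_C: "clique E C"
    and cover: "V = insert r1 (insert r2 (S \<union> C))"
    and overlap: "S \<inter> C = {c}"
    and r_notin: "r1 \<notin> S" "r1 \<notin> C" "r2 \<notin> S" "r2 \<notin> C" and r1_ne_r2: "r1 \<noteq> r2"
    and two_le_card_C: "2 \<le> card C"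
    and centre_nonadj_r2: "(c, r2) \<notin> E"
begin

lemma subsets_V: "S \<subseteq> V" "C \<subseteq> V" "r1 \<in> V" "r2 \<in> V"
  using cover by auto

lemma centre: "c \<in> S" "c \<in> C" "c \<in> V"
  using overlap subsets_V by auto

lemma other_clique_vertex:
  obtains v where "v \<in> C" "v \<noteq> c"
proof -
  have "\<not> C \<subseteq> {c}"
    using two_le_card_C card_mono[of "{c}" C] by auto
  then show ?thesis using that by blast
qed

lemma clique_vertex_deletion:
  assumes x: "x \<in> C" "x \<noteq> c"
  shows "(c, r1) \<in> E" "(x, r1) \<notin> E" "\<exists>y\<in>V. y \<notin> C \<and> (r1, y) \<in> E \<and> (x, y) \<notin> E"
proof -
  obtain a b where ab: "a \<in> V" "b \<in> V" "(a, b) \<in> E" "a \<notin> C" "b \<notin> C" "(x, a) \<notin> E" "(x, b) \<notin> E"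
    and dom: "\<forall>z\<in>V. z = x \<or> z = a \<or> z = b \<or> (z, a) \<in> E \<or> (z, b) \<in> E"
    using vertex_deletion_clique[OF clique_C x(1) subsets_V(2)] by metis
  have "c \<noteq> a" "c \<noteq> b" "c \<noteq> x" using ab(4,5) centre(2) x(2) by auto
  then have "(c, a) \<in> E \<or> (c, b) \<in> E" using bspec[OF dom centre(3)] by blast
  moreover have "q = r1" if "(c, q) \<in> E" "q \<in> V" "q \<notin> C" for q
  proof -
    have "q \<notin> S" using independentD[OF independent_S centre(1)] that(1) by blast
    moreover have "q \<noteq> r2" using centre_nonadj_r2 that(1) by blast
    ultimately show ?thesis using that(2,3) cover by blast
  qed
  ultimately have "a = r1 \<and> (c, a) \<in> E \<or> b = r1 \<and> (c, b) \<in> E" using ab by blast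
  then show "(c, r1) \<in> E" "(x, r1) \<notin> E" "\<exists>y\<in>V. y \<notin> C \<and> (r1, y) \<in> E \<and> (x, y) \<notin> E"
    using ab edge_sym[OF ab(3)] by auto
qed

lemma centre_adj_r1: "(c, r1) \<in> E"
  using clique_vertex_deletion(1) other_clique_vertex by metis

lemma r1_nonadj_C:
  assumes "x \<in> C" "x \<noteq> c"
  shows "(x, r1) \<notin> E" "(r1, x) \<notin> E"
  using clique_vertex_deletion(2)[OF assms] edge_sym[of r1 x] by blast+

lemma r1_neighbour:
  assumes "(r1, q) \<in> E"
  shows "q \<in> S \<or> q = r2"
proof -
  have "q \<in> V" "q \<noteq> r1" using assms edge_in_V edge_irrefl by blast+
  moreover have "q \<in> C \<Longrightarrow> q = c" using assms r1_nonadj_C(2) by blast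
  ultimately show ?thesis using cover centre(1) by blast
qed

lemma r2_adj_S:
  assumes t: "t \<in> S" "t \<noteq> c"
  shows "(r2, t) \<in> E"
proof -
  obtain a b where ab: "a \<in> V" "b \<in> V" "(a, b) \<in> E" "a \<notin> C" "b \<notin> C" "(c, a) \<notin> E" "(c, b) \<notin> E"
    and dom: "\<forall>z\<in>V. z = c \<or> z = a \<or> z = b \<or> (z, a) \<in> E \<or> (z, b) \<in> E"
    using vertex_deletion_clique[OF clique_C centre(2) subsets_V(2)] by metis
  have "a \<noteq> r1" "b \<noteq> r1" using ab(6,7) centre_adj_r1 by blast+
  then have "a \<in> S \<or> a = r2" "b \<in> S \<or> b = r2" using ab(1,2,4,5) cover by blast+
  moreover have "\<not> (a \<in> S \<and> b \<in> S)" using independentD[OF independent_S] ab(3) by blast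
  moreover have "a \<noteq> b" using ab(3) edge_irrefl by blast
  ultimately obtain s0 where s0: "s0 \<in> S" "(r2, s0) \<in> E"
    and dom': "\<forall>z\<in>V. z = c \<or> z = r2 \<or> z = s0 \<or> (z, r2) \<in> E \<or> (z, s0) \<in> E"
    using ab(3) edge_sym[OF ab(3)] dom by blast
  show ?thesis
  proof (cases "t = s0")
    case True
    then show ?thesis using s0(2) by simp
  next
    case False
    have "t \<noteq> r2" "t \<in> V" using t r_notin subsets_V by auto
    moreover have "(t, s0) \<notin> E" using independentD[OF independent_S t(1) s0(1)] .
    ultimately have "(t, r2) \<in> E" using bspec[OF dom'] t(2) False by blast
    then show ?thesis by (rule edge_sym)
  qed
qed

lemma no_clique_vertex_dominates_S:
  assumes w: "w \<in> C" "w \<noteq> c" and S_w: "\<And>z. z \<in> S \<Longrightarrow> z \<noteq> c \<Longrightarrow> (z, w) \<in> E"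
    and s: "s \<in> S" "s \<noteq> c" "(r1, s) \<in> E"
  shows False
proof -
  have "(w, s) \<in> E" using edge_sym[OF S_w[OF s(1,2)]] .
  moreover have "w \<in> V" "s \<in> V" using w(1) s(1) subsets_V by blast+
  ultimately obtain z where z: "z \<in> V" "z \<noteq> w" "z \<noteq> s" "(z, w) \<notin> E" "(z, s) \<notin> E"
    using no_dominating_pair by blast
  have "z \<notin> C" using cliqueD[OF clique_C _ w(1)] z(2,4) by blast
  moreover have "z \<notin> S" using S_w z(4) \<open>z \<notin> C\<close> centre(2) by blast
  moreover have "z \<noteq> r1" "z \<noteq> r2" using s(3) r2_adj_S[OF s(1,2)] z(5) by blast+
  ultimately show False using z(1) cover by blast
qed

lemma r1_nonadj_S_if_adj_r2:
  assumes r12: "(r1, r2) \<in> E" and s: "s \<in> S" "s \<noteq> c"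
  shows "(r1, s) \<notin> E"
proof
  assume r1s: "(r1, s) \<in> E"
  obtain a b where ab: "a \<in> V" "b \<in> V" "(a, b) \<in> E" "a \<noteq> r2" "b \<noteq> r2" "(r2, a) \<notin> E" "(r2, b) \<notin> E"
    and dom: "\<forall>z\<in>V. z = r2 \<or> z = a \<or> z = b \<or> (z, a) \<in> E \<or> (z, b) \<in> E"
    by (rule vertex_deletionE[OF subsets_V(4)])
  have in_C: "q \<in> C" if "q \<in> V" "q \<noteq> r2" "(r2, q) \<notin> E" for q
  proof -
    have "q \<noteq> r1" using r12 that(3) edge_sym[of r1 r2] by blast
    moreover have "q \<in> S \<Longrightarrow> q = c" using r2_adj_S that(3) by blast
    ultimately show ?thesis using that(1,2) cover centre(2) by blast
  qed
  have C: "a \<in> C" "b \<in> C" using in_C ab by blast+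
  then have "r1 \<noteq> a" "r1 \<noteq> b" using r_notin(2) by blast+
  then have "(r1, a) \<in> E \<or> (r1, b) \<in> E" using bspec[OF dom subsets_V(3)] r1_ne_r2 by blast
  moreover have "a \<noteq> b" using ab(3) edge_irrefl by blast
  ultimately obtain w where w: "w \<in> C" "w \<noteq> c"
    and dom_w: "\<forall>z\<in>V. z = r2 \<or> z = c \<or> z = w \<or> (z, c) \<in> E \<or> (z, w) \<in> E"
    using C dom r1_nonadj_C(2) by metis
  have "(z, w) \<in> E" if "z \<in> S" "z \<noteq> c" for z
  proof -
    have "z \<noteq> r2" "z \<noteq> w" "z \<in> V" using that w overlap r_notin subsets_V by auto
    moreover have "(z, c) \<notin> E" using independentD[OF independent_S that(1) centre(1)] .
    ultimately show ?thesis using bspec[OF dom_w] that(2) by blast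
  qed
  then show False using no_clique_vertex_dominates_S[OF w _ s r1s] by blast
qed

lemma added_edge_pair_at_clique_vertex:
  assumes r12: "(r1, r2) \<notin> E" and v: "v \<in> C" "v \<noteq> c"
    and b: "v = b \<or> (v, b) \<in> add_edge E v r2"
    and dom: "\<forall>z\<in>V. z = v \<or> z = b \<or> (z, v) \<in> add_edge E v r2 \<or> (z, b) \<in> add_edge E v r2"
  shows False
proof -
  obtain y where y: "y \<in> V" "y \<notin> C" "(r1, y) \<in> E" "(v, y) \<notin> E"
    using clique_vertex_deletion(3)[OF v] by blast
  have "y \<in> S" using r1_neighbour[OF y(3)] r12 y(3) by blast
  then have "y \<noteq> v" "y \<noteq> r2" using v(1) y(2) r_notin by auto
  then have "y \<noteq> b" "(y, v) \<notin> add_edge E v r2"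
    using b y(4) edge_sym[of y v] unfolding add_edge_iff by auto
  then have "(y, b) \<in> E" using bspec[OF dom y(1)] \<open>y \<noteq> v\<close> \<open>y \<noteq> r2\<close> unfolding add_edge_iff by auto
  have "r1 \<noteq> v" using v(1) r_notin(2) by blast
  moreover have "(v, r1) \<notin> E" using r1_nonadj_C(1)[OF v] .
  ultimately have "r1 \<noteq> b" "(r1, v) \<notin> add_edge E v r2"
    using b r1_ne_r2 edge_sym[of r1 v] unfolding add_edge_iff by auto
  then have "(r1, b) \<in> E"
    using bspec[OF dom subsets_V(3)] \<open>r1 \<noteq> v\<close> r1_ne_r2 unfolding add_edge_iff by auto
  then have "b \<in> S" using r1_neighbour r12 by blast
  then show False using independentD[OF independent_S \<open>y \<in> S\<close>] \<open>(y, b) \<in> E\<close> by blast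
qed

lemma added_edge_pair_at_r2:
  assumes r12: "(r1, r2) \<notin> E" and v: "v \<in> C" "v \<noteq> c" and b: "b \<in> V"
    and b_adj: "r2 = b \<or> (r2, b) \<in> add_edge E v r2"
    and dom: "\<forall>z\<in>V. z = r2 \<or> z = b \<or> (z, r2) \<in> add_edge E v r2 \<or> (z, b) \<in> add_edge E v r2"
  shows False
proof -
  have "c \<noteq> v" "c \<noteq> r2" using v(2) centre(1) r_notin by auto
  then have "c \<noteq> b" "(c, r2) \<notin> add_edge E v r2"
    using b_adj centre_nonadj_r2 edge_sym[of r2 c] unfolding add_edge_iff by auto
  then have cb: "(c, b) \<in> E"
    using bspec[OF dom centre(3)] \<open>c \<noteq> v\<close> \<open>c \<noteq> r2\<close> unfolding add_edge_iff by auto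
  have "b \<noteq> r1"
    using b_adj r1_ne_r2 r12 edge_sym[of r2 r1] v(1) r_notin(2) unfolding add_edge_iff by auto
  moreover have "b \<notin> S" "b \<noteq> r2" "b \<noteq> c"
    using independentD[OF independent_S centre(1)] cb centre_nonadj_r2 edge_irrefl by auto
  ultimately have "b \<in> C" using b cover by blast
  have "r1 \<noteq> v" "r1 \<noteq> b" using v(1) \<open>b \<in> C\<close> r_notin(2) by auto
  moreover have "(r1, b) \<notin> E" using r1_nonadj_C(2)[OF \<open>b \<in> C\<close> \<open>b \<noteq> c\<close>] .
  ultimately show False
    using bspec[OF dom subsets_V(3)] r1_ne_r2 r12 unfolding add_edge_iff by auto
qed

text \<open>A dominating pair of \<open>G + vr\<^sub>2\<close> must contain \<open>v\<close> or \<open>r\<^sub>2\<close>, and neither is possible.\<close>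

lemma r2_adj_C_if_nonadj_r1:
  assumes r12: "(r1, r2) \<notin> E" and v: "v \<in> C" "v \<noteq> c"
  shows "(r2, v) \<in> E"
proof (rule ccontr)
  assume "(r2, v) \<notin> E"
  then have "(v, r2) \<notin> E" using edge_sym by blast
  moreover have "v \<in> V" "v \<noteq> r2" using v(1) subsets_V r_notin by auto
  ultimately obtain a b where ab: "a \<in> V" "b \<in> V" "a = b \<or> (a, b) \<in> add_edge E v r2"
    and dom: "\<forall>z\<in>V. z = a \<or> z = b \<or> (z, a) \<in> add_edge E v r2 \<or> (z, b) \<in> add_edge E v r2"
    using edge_addition subsets_V(4) by blast
  have sym_ab: "b = a \<or> (b, a) \<in> add_edge E v r2"
    using ab(3) edge_sym[of a b] unfolding add_edge_iff by blast
  have dom_ba: "\<forall>z\<in>V. z = b \<or> z = a \<or> (z, b) \<in> add_edge E v r2 \<or> (z, a) \<in> add_edge E v r2"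
    using dom by blast
  consider "a = v" | "b = v" | "a = r2" | "b = r2" | "a \<notin> {v, r2}" "b \<notin> {v, r2}" by blast
  then show False
  proof cases
    case 1
    then show False using added_edge_pair_at_clique_vertex[OF r12 v] ab(3) dom by blast
  next
    case 2
    then show False using added_edge_pair_at_clique_vertex[OF r12 v] sym_ab dom_ba by blast
  next
    case 3
    then show False using added_edge_pair_at_r2[OF r12 v ab(2)] ab(3) dom by blast
  next
    case 4
    then show False using added_edge_pair_at_r2[OF r12 v ab(1)] sym_ab dom_ba by blast
  next
    case 5
    then have "a = b \<or> (a, b) \<in> E" "\<forall>z\<in>V. z = a \<or> z = b \<or> (z, a) \<in> E \<or> (z, b) \<in> E"
      using ab(3) dom unfolding add_edge_iff by auto
    then show False using no_dominating_pair[OF ab(1,2)] by blast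
  qed
qed

text \<open>Whether \<open>r\<^sub>1r\<^sub>2\<close> is an edge decides the exchange: if it is, \<open>S - {c} + r\<^sub>1\<close> is
  independent, otherwise \<open>C - {c} + r\<^sub>2\<close> is a clique; either way one vertex stays outside.\<close>

lemma in_G1: "in_G1 (card C) V E"
proof (cases "(r1, r2) \<in> E")
  case True
  have "split_but_one V E (insert r1 (S - {c})) C r2"
  proof (intro split_but_one.intro split_but_one_axioms.intro)
    show "max_gc3_critical V E" by (rule max_gc3_critical_axioms)
    have "(x, y) \<notin> E" if "x \<in> insert r1 (S - {c})" "y \<in> insert r1 (S - {c})" for x y
      using that independentD[OF independent_S] r1_nonadj_S_if_adj_r2[OF True]
        edge_sym[of x y] edge_irrefl[of r1] by auto
    then show "independent E (insert r1 (S - {c}))" unfolding independent_def by blast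
    show "V = insert r2 (insert r1 (S - {c}) \<union> C)" using cover centre(2) by blast
    show "r2 \<notin> insert r1 (S - {c})" "insert r1 (S - {c}) \<inter> C = {}"
      using r_notin r1_ne_r2 overlap by auto
  qed (fact clique_C r_notin(4) two_le_card_C)+
  then show ?thesis by (rule split_but_one.in_G1)
next
  case False
  have finite_C: "finite C" using subsets_V(2) finite_V finite_subset by blast
  have "split_but_one V E S (insert r2 (C - {c})) r1"
  proof (intro split_but_one.intro split_but_one_axioms.intro)
    show "max_gc3_critical V E" by (rule max_gc3_critical_axioms)
    have "(x, y) \<in> E" if "x \<in> insert r2 (C - {c})" "y \<in> insert r2 (C - {c})" "x \<noteq> y" for x y
      using that cliqueD[OF clique_C] r2_adj_C_if_nonadj_r1[OF False] edge_sym[of y x] by auto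
    then show "clique E (insert r2 (C - {c}))" unfolding clique_def by blast
    show "2 \<le> card (insert r2 (C - {c}))"
      using two_le_card_C finite_C centre(2) r_notin by simp
    show "V = insert r1 (S \<union> insert r2 (C - {c}))" using cover centre(1) by blast
    show "r1 \<notin> insert r2 (C - {c})" "S \<inter> insert r2 (C - {c}) = {}"
      using r_notin r1_ne_r2 overlap by auto
  qed (fact independent_S r_notin(1))+
  moreover have "card (insert r2 (C - {c})) = card C"
    using finite_C centre(2) r_notin two_le_card_C by simp
  ultimately show ?thesis using split_but_one.in_G1 by metis
qed

end

lemma card_outside_union:
  assumes "finite V" "S \<subseteq> V" "C \<subseteq> V"
  shows "card S + card C + card (V - (S \<union> C)) = card V + card (S \<inter> C)"
proof -
  have fin: "finite S" "finite C" using assms finite_subset by blast+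
  have "card (V - (S \<union> C)) = card V - card (S \<union> C)"
    using assms fin by (intro card_Diff_subset) auto
  moreover have "card (S \<union> C) \<le> card V" using assms by (intro card_mono) auto
  moreover have "card (S \<union> C) + card (S \<inter> C) = card S + card C" using card_Un_Int[OF fin] by simp
  ultimately show ?thesis by linarith
qed

context max_gc3_critical
begin

lemma centre_nonadj_outside:
  assumes S: "independent E S" and C: "clique E C" "C \<subseteq> V" and c: "c \<in> C"
    and cover: "V = insert ra (insert rb (S \<union> C))"
  shows "(c, ra) \<notin> E \<or> (c, rb) \<notin> E"
proof -
  obtain a b where ab: "a \<in> V" "b \<in> V" "(a, b) \<in> E" "a \<notin> C" "b \<notin> C" "(c, a) \<notin> E" "(c, b) \<notin> E"
    using vertex_deletion_clique[OF C(1) c C(2)] by metis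
  have "\<not> (a \<in> S \<and> b \<in> S)" using independentD[OF S] ab(3) by blast
  then have "a \<in> {ra, rb} \<or> b \<in> {ra, rb}" using ab(1,2,4,5) cover by blast
  then show ?thesis using ab(6,7) by blast
qed

lemma overlapping_cover_in_G1:
  assumes S: "independent E S" and C: "clique E C" "C \<subseteq> V" "2 \<le> card C"
    and overlap: "S \<inter> C = {c}" and R: "V - (S \<union> C) = {ra, rb}" "ra \<noteq> rb" and "S \<subseteq> V"
  shows "in_G1 (card C) V E"
proof -
  have cover: "V = insert ra (insert rb (S \<union> C))" "V = insert rb (insert ra (S \<union> C))"
    using R(1) C(2) \<open>S \<subseteq> V\<close> by blast+
  have outside: "ra \<notin> S" "ra \<notin> C" "rb \<notin> S" "rb \<notin> C" using R(1) by blast+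
  have "c \<in> C" using overlap by blast
  then consider "(c, rb) \<notin> E" | "(c, ra) \<notin> E"
    using centre_nonadj_outside[OF S C(1,2) _ cover(1)] by blast
  then show ?thesis
  proof cases
    case 1
    then have "split_but_two V E S C c ra rb"
      by (intro split_but_two.intro split_but_two_axioms.intro max_gc3_critical_axioms
          S C(1,3) cover(1) overlap outside R(2))
    then show ?thesis by (rule split_but_two.in_G1)
  next
    case 2
    then have "split_but_two V E S C c rb ra"
      using R(2) by (intro split_but_two.intro split_but_two_axioms.intro max_gc3_critical_axioms
          S C(1,3) cover(2) overlap outside) auto
    then show ?thesis by (rule split_but_two.in_G1)
  qed
qed

lemma disjoint_independent_clique_bound:
  assumes S: "independent E S" "S \<subseteq> V" and C: "clique E C" "C \<subseteq> V" "2 \<le> card C"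
    and disjoint: "S \<inter> C = {}"
  shows "card S + card C \<le> card V - 1"
    and "card S + card C = card V - 1 \<Longrightarrow> in_G1 (card C) V E"
proof -
  let ?R = "V - (S \<union> C)"
  have count: "card S + card C + card ?R = card V"
    using card_outside_union[OF finite_V S(2) C(2)] disjoint by simp
  have "C \<noteq> {}" using C(3) by auto
  then have "?R \<noteq> {}" using disjoint_cover_leaves_vertex S(1) C(1,2) by blast
  then have "card ?R \<ge> 1" using finite_V by (simp add: Suc_le_eq card_gt_0_iff)
  then show "card S + card C \<le> card V - 1" using count by linarith
  assume "card S + card C = card V - 1"
  then have "card ?R = 1" using count \<open>card ?R \<ge> 1\<close> by linarith
  then obtain r where "?R = {r}" by (rule card_1_singletonE)
  then have "split_but_one V E S C r"
    using S C(2) disjoint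
    by (intro split_but_one.intro split_but_one_axioms.intro max_gc3_critical_axioms S(1) C(1,3))
      auto
  then show "in_G1 (card C) V E" by (rule split_but_one.in_G1)
qed

lemma overlapping_independent_clique_bound:
  assumes S: "independent E S" "S \<subseteq> V" and C: "clique E C" "C \<subseteq> V" "2 \<le> card C"
    and overlap: "S \<inter> C = {c}"
  shows "card S + card C \<le> card V - 1"
    and "card S + card C = card V - 1 \<Longrightarrow> in_G1 (card C) V E"
proof -
  let ?R = "V - (S \<union> C)"
  have count: "card S + card C + card ?R = card V + 1"
    using card_outside_union[OF finite_V S(2) C(2)] overlap by simp
  have "card ?R \<ge> 2"
  proof (rule ccontr)
    assume "\<not> card ?R \<ge> 2"
    then have "card ?R \<le> Suc 0" by simp
    then obtain r where "?R \<subseteq> {r}"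
      using card_le_Suc0_iff_eq[of ?R] finite_V by blast
    moreover obtain v where "v \<in> C" "v \<noteq> c"
      using C(3) card_mono[of "{c}" C] finite_V C(2) finite_subset by force
    ultimately show False
      using overlapping_cover_leaves_two_vertices[OF S(1) C(1,2) overlap] by blast
  qed
  then show "card S + card C \<le> card V - 1" using count by linarith
  assume "card S + card C = card V - 1"
  then have "card ?R = 2" using count \<open>card ?R \<ge> 2\<close> by linarith
  then obtain ra rb where "?R = {ra, rb}" "ra \<noteq> rb" by (meson card_2_iff)
  then show "in_G1 (card C) V E" using overlapping_cover_in_G1 S C overlap by blast
qed

lemma independent_clique_bound:
  assumes S: "independent E S" "S \<subseteq> V" and C: "clique E C" "C \<subseteq> V" "2 \<le> card C"
  shows "card S + card C \<le> card V - 1"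
    and "card S + card C = card V - 1 \<Longrightarrow> in_G1 (card C) V E"
proof -
  obtain c where "S \<inter> C \<subseteq> {c}" using independent_Int_clique_subset_singleton[OF S(1) C(1)] .
  then consider "S \<inter> C = {}" | "S \<inter> C = {c}" by blast
  then show "card S + card C \<le> card V - 1"
    and "card S + card C = card V - 1 \<Longrightarrow> in_G1 (card C) V E"
    by (cases; use disjoint_independent_clique_bound[OF S C]
        overlapping_independent_clique_bound[OF S C] in blast)+
qed

end

theorem theorem3p6:
  fixes V :: "'a set" and E :: "('a \<times> 'a) set"
  assumes "maximal_vertex_critical 3 V E"
  shows "independence_number V E + clique_number V E \<le> card V - 1 \<and>
         (independence_number V E + clique_number V E = card V - 1 \<longleftrightarrow>
            (\<exists>l\<ge>2. in_G1 l V E))"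
proof -
  interpret max_gc3_critical V E
    using assms by (rule maximal_vertex_critical_3_imp_max_gc3_critical)
  obtain S where S: "S \<subseteq> V" "independent E S" "card S = independence_number V E"
    using independence_number_attained[OF finite_V] by blast
  obtain C where C: "C \<subseteq> V" "clique E C" "card C = clique_number V E"
    using clique_number_attained[OF finite_V] by blast
  have "2 \<le> card C" using C(3) two_le_clique_number by simp
  note bound = independent_clique_bound[OF S(2,1) C(2,1) this, unfolded S(3) C(3)]
  show ?thesis
    using bound two_le_clique_number in_G1_independence_number_plus_clique_number finite_V
    by blast
qed

end
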